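(* Let $M\ge3$ be an integer and $p\in[2,\infty]$. For every continuous $M$-linear form $T:X_p\times X_\infty\times\cdots\times X_\infty\to\mathbb{R}$, \[ \left(\sum_{i_1=1}^\infty\left(\sum_{i_2,\dots,i_M=1}^\infty|T(e_{i_1},\dots,e_{i_M})|^2\right)^{\frac12\cdot\frac{p}{p-1}}\right)^{\frac{p-1}{p}}\le\left(\mathrm{A}_{\frac{p}{p-1}}\right)^{M-1}\|T\|. \] Hence the optimal constant $C_{(M),p}$ satisfies $C_{(M),p}\le(\mathrm{A}_{p/(p-1)})^{M-1}$.
   Context: Scalars are real. $X_p=\ell_p$ for $1\le p<\infty$, $X_\infty=c_0$, $(e_k)$ canonical unit vectors. For a continuous $M$-linear form $T:X_{p_1}\times\cdots\times X_{p_M}\to\mathbb{R}$, $\|T\|=\sup\{|T(x^{(1)},\dots,x^{(M)})|:\|x^{(k)}\|_{X_{p_k}}\le1\}$. $p/(p-1)$ is read as $1$ when $p=\infty$. $r_j(t)=\operatorname{sign}(\sin(2^j\pi t))$ are the Rademacher functions, and for $0<r<\infty$, $\mathrm{A}_r$ is the optimal constant such that $\left(\sum_{j=1}^n|a_j|^2\right)^{1/2}\le \mathrm{A}_r\left(\int_0^1|\sum_{j=1}^n a_jr_j(t)|^rdt\right)^{1/r}$ for all $n$ and real $a_j$. $C_{(M),p}$ denotes the optimal constant $C$ in the displayed inequality (with $C$ in place of $(\mathrm{A}_{p/(p-1)})^{M-1}$) over all such $T$. *)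

theory Defs
  imports "HOL-Analysis.Analysis"
begin

(* Sequences are functions nat => real; index 0 plays the role of index 1. *)

definition unit_vec :: "nat \<Rightarrow> nat \<Rightarrow> real" where
  "unit_vec n = (\<lambda>m. if m = n then 1 else 0)"

(* X_p: ell_p for finite p >= 1, c_0 for p = \<infinity> *)
definition Xspace :: "ereal \<Rightarrow> (nat \<Rightarrow> real) set" where
  "Xspace p = (if p = \<infinity> then {x. x \<longlonglongrightarrow> 0}
               else {x. summable (\<lambda>n. \<bar>x n\<bar> powr real_of_ereal p)})"

definition Xnorm :: "ereal \<Rightarrow> (nat \<Rightarrow> real) \<Rightarrow> real" where
  "Xnorm p x = (if p = \<infinity> then (SUP n. \<bar>x n\<bar>)
               else (\<Sum>n. \<bar>x n\<bar> powr real_of_ereal p) powr (1 / real_of_ereal p))"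

definition conj_exp :: "ereal \<Rightarrow> real" where
  "conj_exp p = (if p = \<infinity> then 1 else real_of_ereal p / (real_of_ereal p - 1))"

(* Domain of an M-linear form on X_{ps 0} x ... x X_{ps (M-1)}: M-tuples of
   sequences, encoded as functions k \<mapsto> x k, with x k = 0 for k >= M. *)
definition mdom :: "nat \<Rightarrow> (nat \<Rightarrow> ereal) \<Rightarrow> (nat \<Rightarrow> nat \<Rightarrow> real) set" where
  "mdom M ps = {x. (\<forall>k<M. x k \<in> Xspace (ps k)) \<and> (\<forall>k\<ge>M. x k = (\<lambda>_. 0))}"

definition multilinear_form :: "nat \<Rightarrow> (nat \<Rightarrow> ereal) \<Rightarrow> ((nat \<Rightarrow> nat \<Rightarrow> real) \<Rightarrow> real) \<Rightarrow> bool" where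
  "multilinear_form M ps T \<longleftrightarrow>
     (\<forall>x\<in>mdom M ps. \<forall>k<M. \<forall>u\<in>Xspace (ps k). \<forall>v\<in>Xspace (ps k). \<forall>a b :: real.
        T (x(k := (\<lambda>n. a * u n + b * v n))) = a * T (x(k := u)) + b * T (x(k := v)))"

definition continuous_form :: "nat \<Rightarrow> (nat \<Rightarrow> ereal) \<Rightarrow> ((nat \<Rightarrow> nat \<Rightarrow> real) \<Rightarrow> real) \<Rightarrow> bool" where
  "continuous_form M ps T \<longleftrightarrow>
     (\<forall>x\<in>mdom M ps. \<forall>\<epsilon>>0. \<exists>\<delta>>0. \<forall>y\<in>mdom M ps.
        (\<forall>k<M. Xnorm (ps k) (\<lambda>n. y k n - x k n) < \<delta>) \<longrightarrow> \<bar>T y - T x\<bar> < \<epsilon>)"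

definition form_norm :: "nat \<Rightarrow> (nat \<Rightarrow> ereal) \<Rightarrow> ((nat \<Rightarrow> nat \<Rightarrow> real) \<Rightarrow> real) \<Rightarrow> real" where
  "form_norm M ps T = (SUP x\<in>{x\<in>mdom M ps. \<forall>k<M. Xnorm (ps k) (x k) \<le> 1}. \<bar>T x\<bar>)"

definition eval_units :: "nat \<Rightarrow> ((nat \<Rightarrow> nat \<Rightarrow> real) \<Rightarrow> real) \<Rightarrow> (nat \<Rightarrow> nat) \<Rightarrow> real" where
  "eval_units M T i = T (\<lambda>k. if k < M then unit_vec (i k) else (\<lambda>_. 0))"

definition rademacher :: "nat \<Rightarrow> real \<Rightarrow> real" where
  "rademacher j t = sgn (sin (2 ^ j * pi * t))"

definition khintchine_A :: "real \<Rightarrow> real" where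
  "khintchine_A r = Inf {C. \<forall>(n::nat) (a::nat \<Rightarrow> real).
     sqrt (\<Sum>j=1..n. (a j)\<^sup>2)
       \<le> C * (integral {0..1} (\<lambda>t. \<bar>\<Sum>j=1..n. a j * rademacher j t\<bar> powr r)) powr (1 / r)}"

definition ennpowr :: "ennreal \<Rightarrow> real \<Rightarrow> ennreal" where
  "ennpowr x a = (if x = top then top else ennreal (enn2real x powr a))"

definition mixed_sum :: "nat \<Rightarrow> real \<Rightarrow> ((nat \<Rightarrow> nat \<Rightarrow> real) \<Rightarrow> real) \<Rightarrow> ennreal" where
  "mixed_sum M q T = ennpowr
     (\<Sum>\<^sub>\<infinity> i1\<in>(UNIV::nat set). ennpowr
        (\<Sum>\<^sub>\<infinity> i\<in>PiE {1..<M} (\<lambda>_. UNIV :: nat set). ennreal ((eval_units M T (i(0 := i1)))\<^sup>2))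
        (q / 2))
     (1 / q)"

end

theory Submission
  imports Defs
begin

text \<open>Averages over the \<open>2\<^sup>n\<close> sign vectors in \<open>{-1, 1}\<^sup>n\<close> replace integrals of Rademacher
  sums. The fourth-moment argument shows that admissible Khintchine constants exist, and since
  they form a closed set, \<open>A\<^sub>r\<close> itself is admissible. Let \<open>r = p/(p - 1) \<in> [1, 2]\<close>.
  Placing sign vectors (of sup-norm one) into the \<open>c\<^sub>0\<close>-coordinates \<open>2, \<dots>, M\<close>, the duality
  of \<open>\<ell>\<^sub>p\<close> and \<open>\<ell>\<^sub>r\<close> gives \<open>\<Sum>\<^sub>i |T(e\<^sub>i, y\<^sub>2, \<dots>, y\<^sub>M)|\<^sup>r \<le> \<parallel>T\<parallel>\<^sup>r\<close>. A multiple Khintchine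
  inequality, proved one coordinate at a time with Minkowski's inequality in \<open>\<ell>\<^bsub>2/r\<^esub>\<close>
  (this is where \<open>r \<le> 2\<close> is needed), bounds the \<open>r/2\<close>-th power of the sum of squares over
  \<open>i\<^sub>2, \<dots>, i\<^sub>M\<close> by \<open>A\<^sub>r\<^bsup>(M-1)r\<^esup>\<close> times the average of \<open>|T(e\<^sub>i, y\<^sub>2, \<dots>, y\<^sub>M)|\<^sup>r\<close> over sign
  vectors. Summing over \<open>i\<close> proves the inequality for finite truncations, and monotone
  convergence passes to the infinite sums.\<close>

section \<open>Averages over sign vectors\<close>

text \<open>For \<open>k < 2\<^sup>n\<close>, the entries of \<open>sign_vector n k\<close> are the values of the Rademacher
  functions \<open>r\<^sub>1, \<dots>, r\<^sub>n\<close> on the dyadic interval \<open>(k/2\<^sup>n, (k+1)/2\<^sup>n)\<close>, so \<open>sign_mean n\<close>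
  is integration over \<open>[0, 1]\<close> of functions of \<open>r\<^sub>1, \<dots>, r\<^sub>n\<close>.\<close>
definition sign_vector :: "nat \<Rightarrow> nat \<Rightarrow> nat \<Rightarrow> real" where
  "sign_vector n k = (\<lambda>j. if j < n then (-1) ^ (k div 2^(n-1-j)) else 0)"

definition sign_mean :: "nat \<Rightarrow> ((nat \<Rightarrow> real) \<Rightarrow> real) \<Rightarrow> real" where
  "sign_mean n F = (\<Sum>k<2^n. F (sign_vector n k)) / 2^n"

lemma sum_lessThan_mult_2_in_pairs:
  fixes G :: "nat \<Rightarrow> 'a::comm_monoid_add"
  shows "(\<Sum>k<2*m. G k) = (\<Sum>k<m. G (2*k) + G (2*k+1))"
  by (induction m) (simp_all add: algebra_simps)

lemma sign_vector_Suc: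
  assumes "b < 2"
  shows "sign_vector (Suc n) (2*k + b) = (sign_vector n k)(n := (-1)^b)"
proof
  fix j
  have "(2*k + b) div 2^(n - j) = k div 2^(n - Suc j)" if "j < n"
  proof -
    have "n - j = Suc (n - Suc j)"
      using that by simp
    then have "(2*k + b) div 2^(n - j) = (2*k + b) div 2 div 2^(n - Suc j)"
      by (simp add: div_mult2_eq)
    then show ?thesis
      using assms by simp
  qed
  then show "sign_vector (Suc n) (2*k + b) j = ((sign_vector n k)(n := (-1)^b)) j"
    using assms by (auto simp: sign_vector_def less_Suc_eq power_add power_mult)
qed

lemma sign_mean_Suc:
  "sign_mean (Suc n) F = sign_mean n (\<lambda>s. (F (s(n := 1)) + F (s(n := -1))) / 2)"
proof -
  have "(\<Sum>k<2^Suc n. F (sign_vector (Suc n) k))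
      = (\<Sum>k<2^n. F (sign_vector (Suc n) (2*k + 0)) + F (sign_vector (Suc n) (2*k + 1)))"
    by (simp add: sum_lessThan_mult_2_in_pairs)
  also have "\<dots> = (\<Sum>k<2^n. F ((sign_vector n k)(n := 1)) + F ((sign_vector n k)(n := -1)))"
    by (simp only: sign_vector_Suc) simp
  finally show ?thesis
    by (simp add: sign_mean_def sum_divide_distrib)
qed

lemma sign_mean_cong:
  "(\<And>k. k < 2^n \<Longrightarrow> F (sign_vector n k) = G (sign_vector n k)) \<Longrightarrow> sign_mean n F = sign_mean n G"
  unfolding sign_mean_def by (metis (no_types, lifting) lessThan_iff sum.cong)

lemma sign_mean_add: "sign_mean n (\<lambda>s. F s + G s) = sign_mean n F + sign_mean n G"
  by (simp add: sign_mean_def sum.distrib add_divide_distrib)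

lemma sign_mean_diff: "sign_mean n (\<lambda>s. F s - G s) = sign_mean n F - sign_mean n G"
  by (simp add: sign_mean_def sum_subtractf diff_divide_distrib)

lemma sign_mean_cmult: "sign_mean n (\<lambda>s. c * F s) = c * sign_mean n F"
  by (simp add: sign_mean_def sum_distrib_left)

lemma sign_mean_const: "sign_mean n (\<lambda>s. c) = c"
  by (simp add: sign_mean_def)

lemma sign_mean_mono: "(\<And>s. F s \<le> G s) \<Longrightarrow> sign_mean n F \<le> sign_mean n G"
  unfolding sign_mean_def by (intro divide_right_mono sum_mono) auto

lemma sign_mean_nonneg: "(\<And>s. 0 \<le> F s) \<Longrightarrow> 0 \<le> sign_mean n F"
  using sign_mean_mono[of "\<lambda>_. 0" F n] by (simp add: sign_mean_const)

lemma sum_lessThan_fun_upd_beyond: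
  fixes a s :: "nat \<Rightarrow> real"
  assumes "n \<le> j"
  shows "(\<Sum>i<n. a i * (s(j := c)) i) = (\<Sum>i<n. a i * s i)"
  using assms by (intro sum.cong) auto

lemma sign_mean_Suc_linear:
  fixes a :: "nat \<Rightarrow> real"
  shows "sign_mean (Suc n) (\<lambda>s. F (\<Sum>j<Suc n. a j * s j))
       = sign_mean n (\<lambda>s. (F ((\<Sum>j<n. a j * s j) + a n) + F ((\<Sum>j<n. a j * s j) - a n)) / 2)"
  unfolding sign_mean_Suc by (simp add: sum_lessThan_fun_upd_beyond)

lemma sign_mean_square:
  fixes a :: "nat \<Rightarrow> real"
  shows "sign_mean n (\<lambda>s. (\<Sum>j<n. a j * s j)^2) = (\<Sum>j<n. (a j)^2)"
proof (induction n)
  case (Suc n)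
  have "((x + y)^2 + (x - y)^2) / 2 = x^2 + y^2" for x y :: real
    by (simp add: power2_eq_square algebra_simps)
  then have "sign_mean (Suc n) (\<lambda>s. (\<Sum>j<Suc n. a j * s j)^2)
      = sign_mean n (\<lambda>s. (\<Sum>j<n. a j * s j)^2 + (a n)^2)"
    by (simp only: sign_mean_Suc_linear[where F = "\<lambda>x. x^2"])
  then show ?case
    using Suc.IH by (simp add: sign_mean_add sign_mean_const)
qed (simp add: sign_mean_def)

lemma sign_mean_fourth_power_le:
  fixes a :: "nat \<Rightarrow> real"
  shows "sign_mean n (\<lambda>s. (\<Sum>j<n. a j * s j)^4) \<le> 3 * (\<Sum>j<n. (a j)^2)^2"
proof (induction n)
  case (Suc n)
  let ?X = "\<lambda>s. \<Sum>j<n. a j * s j" and ?S = "\<Sum>j<n. (a j)^2"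
  have "((x + y)^4 + (x - y)^4) / 2 = x^4 + 6 * y^2 * x^2 + y^4" for x y :: real
    by (simp add: power4_eq_xxxx power2_eq_square algebra_simps)
  then have "sign_mean (Suc n) (\<lambda>s. (\<Sum>j<Suc n. a j * s j)^4)
      = sign_mean n (\<lambda>s. ?X s^4 + 6 * (a n)^2 * ?X s^2 + (a n)^4)"
    by (simp only: sign_mean_Suc_linear[where F = "\<lambda>x. x^4"])
  also have "\<dots> = sign_mean n (\<lambda>s. ?X s^4) + 6 * (a n)^2 * ?S + (a n)^4"
    by (simp add: sign_mean_add sign_mean_cmult sign_mean_const sign_mean_square)
  also have "\<dots> \<le> 3 * ?S^2 + 6 * (a n)^2 * ?S + 3 * (a n)^4"
    using Suc.IH by (simp add: add_increasing)
  also have "\<dots> = 3 * (\<Sum>j<Suc n. (a j)^2)^2"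
    by (simp add: power2_eq_square power4_eq_xxxx algebra_simps)
  finally show ?case .
qed (simp add: sign_mean_def)

lemma convex_on_powr_nonneg:
  assumes "1 \<le> r"
  shows "convex_on {0..} (\<lambda>x::real. x powr r)"
proof (rule convex_onI)
  fix t x y :: real
  assume t: "0 < t" "t < 1" and xy: "x \<in> {0..}" "y \<in> {0..}"
  show "((1 - t) *\<^sub>R x + t *\<^sub>R y) powr r \<le> (1 - t) * x powr r + t * y powr r"
  proof (cases "x = 0 \<or> y = 0")
    case False
    then show ?thesis
      using xy t convex_onD[OF powr_convex[OF assms], of t x y] by simp
  next
    case True
    have "(u * z) powr r \<le> u * z powr r" if "0 \<le> u" "u \<le> 1" "0 \<le> z" for u z :: real
    proof -
      have "u powr r \<le> u powr 1"
        using that assms by (intro powr_mono') auto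
      then show ?thesis
        using that by (cases "u = 0") (auto simp: powr_mult intro: mult_right_mono)
    qed
    then show ?thesis
      using True xy t by auto
  qed
qed (simp add: convex_real_interval)

lemma sign_mean_powr_le:
  assumes "1 \<le> r" and "\<And>s. 0 \<le> F s"
  shows "sign_mean n F powr r \<le> sign_mean n (\<lambda>s. F s powr r)"
proof -
  have "(\<Sum>k<(2::nat)^n. (1 / 2^n) *\<^sub>R F (sign_vector n k)) powr r
      \<le> (\<Sum>k<(2::nat)^n. (1 / 2^n) * F (sign_vector n k) powr r)"
    using assms by (intro convex_on_sum[OF _ _ convex_on_powr_nonneg]) (auto simp: lessThan_empty_iff)
  then show ?thesis
    by (simp add: sign_mean_def sum_divide_distrib)
qed

section \<open>Khintchine constants\<close>

lemma cubic_abs_lower_bound: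
  fixes x c :: real
  assumes "0 < c"
  shows "3 * c^2 * x^2 - x^4 \<le> 2 * c^3 * \<bar>x\<bar>"
proof -
  have "0 \<le> \<bar>x\<bar> * (\<bar>x\<bar> - c)^2 * (\<bar>x\<bar> + 2*c)"
    using assms by simp
  also have "\<dots> = \<bar>x\<bar>^4 - 3 * c^2 * \<bar>x\<bar>^2 + 2 * c^3 * \<bar>x\<bar>"
    by (simp add: power2_eq_square power4_eq_xxxx power3_eq_cube algebra_simps)
  finally show ?thesis
    by (simp add: power_even_abs)
qed

lemma khintchine_L1_sqrt3:
  fixes a :: "nat \<Rightarrow> real"
  shows "sqrt (\<Sum>j<n. (a j)^2) \<le> sqrt 3 * sign_mean n (\<lambda>s. \<bar>\<Sum>j<n. a j * s j\<bar>)"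
proof (cases "(\<Sum>j<n. (a j)^2) = 0")
  case True
  then show ?thesis
    by (simp add: sign_mean_nonneg)
next
  case False
  define X where "X s = (\<Sum>j<n. a j * s j)" for s
  define \<sigma> where "\<sigma> = sqrt (\<Sum>j<n. (a j)^2)"
  define E where "E = sign_mean n (\<lambda>s. \<bar>X s\<bar>)"
  have \<sigma>: "0 < \<sigma>" "\<sigma>^2 = (\<Sum>j<n. (a j)^2)"
    using False by (auto simp: \<sigma>_def sum_nonneg intro!: le_neq_trans)
  define c where "c = sqrt 3 * \<sigma>"
  have c: "0 < c" "c^2 = 3 * \<sigma>^2" "c^3 = 3 * sqrt 3 * \<sigma>^3"
    using \<sigma> by (auto simp: c_def power_mult_distrib power3_eq_cube)
  have "sign_mean n (\<lambda>s. (X s)^4) \<le> 3 * \<sigma>^4"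
    using sign_mean_fourth_power_le[of n a] by (simp add: X_def flip: \<sigma>(2) power_mult)
  then have "3 * c^2 * \<sigma>^2 - 3 * \<sigma>^4 \<le> 3 * c^2 * \<sigma>^2 - sign_mean n (\<lambda>s. (X s)^4)"
    by simp
  also have "\<dots> = sign_mean n (\<lambda>s. 3 * c^2 * (X s)^2 - (X s)^4)"
    using sign_mean_square[of n a] \<sigma>(2) by (simp add: X_def sign_mean_diff sign_mean_cmult)
  also have "\<dots> \<le> sign_mean n (\<lambda>s. 2 * c^3 * \<bar>X s\<bar>)"
    using cubic_abs_lower_bound[OF c(1)] by (intro sign_mean_mono)
  also have "\<dots> = 2 * c^3 * E"
    by (simp add: E_def sign_mean_cmult)
  finally have "6 * \<sigma>^4 \<le> 6 * sqrt 3 * \<sigma>^3 * E"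
    unfolding c by (simp add: power2_eq_square power4_eq_xxxx power3_eq_cube)
  then have "\<sigma>^3 * \<sigma> \<le> \<sigma>^3 * (sqrt 3 * E)"
    by (simp add: power4_eq_xxxx power3_eq_cube mult_ac)
  then show ?thesis
    using \<sigma>(1) by (simp add: \<sigma>_def E_def X_def)
qed

definition khintchine_const :: "real \<Rightarrow> real \<Rightarrow> bool" where
  "khintchine_const C r \<longleftrightarrow> (\<forall>n (a::nat \<Rightarrow> real).
     sqrt (\<Sum>j<n. (a j)^2) \<le> C * sign_mean n (\<lambda>s. \<bar>\<Sum>j<n. a j * s j\<bar> powr r) powr (1/r))"

lemma khintchine_constD:
  "khintchine_const C r \<Longrightarrow>
     sqrt (\<Sum>j<n. (a j)^2) \<le> C * sign_mean n (\<lambda>s. \<bar>\<Sum>j<n. a j * s j\<bar> powr r) powr (1/r)"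
  unfolding khintchine_const_def by blast

lemma khintchine_const_sqrt3:
  assumes "1 \<le> r"
  shows "khintchine_const (sqrt 3) r"
  unfolding khintchine_const_def
proof (intro allI)
  fix n and a :: "nat \<Rightarrow> real"
  let ?E = "sign_mean n (\<lambda>s. \<bar>\<Sum>j<n. a j * s j\<bar>)"
  have "?E = (?E powr r) powr (1/r)"
    using assms by (simp add: powr_powr sign_mean_nonneg)
  also have "\<dots> \<le> sign_mean n (\<lambda>s. \<bar>\<Sum>j<n. a j * s j\<bar> powr r) powr (1/r)"
    using assms sign_mean_powr_le[OF assms] by (intro powr_mono2) (auto simp: sign_mean_nonneg)
  finally show "sqrt (\<Sum>j<n. (a j)^2) \<le> sqrt 3 * sign_mean n (\<lambda>s. \<bar>\<Sum>j<n. a j * s j\<bar> powr r) powr (1/r)"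
    by (rule order.trans[OF khintchine_L1_sqrt3 mult_left_mono]) simp
qed

lemma khintchine_const_ge_1:
  assumes "khintchine_const C r" and "0 < r"
  shows "1 \<le> C"
proof -
  have "sign_mean 1 (\<lambda>s. \<bar>\<Sum>j<1. 1 * s j\<bar> powr r) = 1"
    by (simp add: sign_mean_def sign_vector_def numeral_2_eq_2 lessThan_Suc)
  then show ?thesis
    using khintchine_constD[OF assms(1), where n = 1 and a = "\<lambda>_. 1"] by simp
qed

lemma khintchine_const_Inf:
  assumes "1 \<le> r"
  shows "khintchine_const (Inf {C. khintchine_const C r}) r"
proof -
  let ?S = "{C. khintchine_const C r}"
  have "closed ?S"
    unfolding khintchine_const_def
    by (intro closed_Collect_all closed_Collect_le continuous_intros)
  moreover have "sqrt 3 \<in> ?S"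
    using khintchine_const_sqrt3[OF assms] by simp
  moreover have "bdd_below ?S"
    using khintchine_const_ge_1 assms by (intro bdd_belowI[of _ 1]) auto
  ultimately show ?thesis
    using closed_contains_Inf[of ?S] by blast
qed

lemma sgn_sin_pi_between:
  assumes "real m < x" "x < real m + 1"
  shows "sgn (sin (x * pi)) = (-1) ^ m"
proof -
  have "sin (x * pi) = sin ((x - m) * pi + real m * pi)"
    by (simp add: algebra_simps)
  also have "\<dots> = (-1) ^ m * sin ((x - m) * pi)"
    by (simp add: sin_add)
  finally show ?thesis
    using assms sin_gt_zero[of "(x - m) * pi"] by (auto simp: sgn_mult minus_one_power_iff)
qed

lemma rademacher_dyadic_interval:
  assumes k: "k < 2^n" and j: "j < n" and t: "real k / 2^n < t" "t < (real k + 1) / 2^n"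
  shows "rademacher (Suc j) t = (-1) ^ (k div 2^(n-1-j))"
proof -
  define d :: nat where "d = 2^(n - Suc j)"
  define m where "m = k div d"
  have "(2::real)^Suc j * 2^(n - Suc j) = 2^n"
    using j by (subst power_add[symmetric]) simp
  then have d: "0 < d" "2^Suc j * real d = 2^n"
    by (simp_all add: d_def)
  define x where "x = 2^Suc j * t"
  have "real k / d < x" "x < (real k + 1) / d"
    using t d by (simp_all add: x_def field_simps)
  moreover have "real m \<le> real k / d"
  proof -
    have "m * d \<le> k"
      by (simp add: m_def div_times_less_eq_dividend)
    then have "real m * d \<le> real k"
      by (metis of_nat_le_iff of_nat_mult)
    then show ?thesis
      using d(1) by (simp add: le_divide_eq)
  qed
  moreover have "(real k + 1) / d \<le> real m + 1"
  proof -
    have "k < m * d + d"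
      using d(1) div_mult_mod_eq[of k d] mod_less_divisor[of d k] unfolding m_def by linarith
    then have "k + 1 \<le> (m + 1) * d"
      by simp
    then have "real k + 1 \<le> (real m + 1) * d"
      by (metis of_nat_1 of_nat_add of_nat_le_iff of_nat_mult)
    then show ?thesis
      using d(1) by (simp add: divide_le_eq)
  qed
  ultimately have "sgn (sin (x * pi)) = (-1) ^ m"
    by (intro sgn_sin_pi_between) linarith+
  moreover have "rademacher (Suc j) t = sgn (sin (x * pi))"
    by (simp add: rademacher_def x_def mult_ac)
  ultimately show ?thesis
    by (simp add: m_def d_def)
qed

lemma has_integral_rademacher_sign_mean:
  fixes G :: "(nat \<Rightarrow> real) \<Rightarrow> real" and n :: nat
  defines "f \<equiv> \<lambda>t. G (\<lambda>j. if j < n then rademacher (Suc j) t else 0)"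
  shows "(f has_integral sign_mean n G) {0..1}"
proof -
  have "(f has_integral (\<Sum>k<m. G (sign_vector n k)) / 2^n) {0..real m / 2^n}" if "m \<le> 2^n" for m
    using that
  proof (induction m)
    case (Suc m)
    define lo where "lo = real m / 2^n"
    define hi where "hi = (real m + 1) / 2^n"
    have "0 \<le> lo" "lo \<le> hi" "hi - lo = 1 / 2^n"
      by (simp_all add: lo_def hi_def divide_right_mono field_simps)
    then have const: "((\<lambda>_. G (sign_vector n m)) has_integral G (sign_vector n m) / 2^n) {lo..hi}"
      using has_integral_const_real[of "G (sign_vector n m)" lo hi] by simp
    have pointwise: "f t = G (sign_vector n m)" if "t \<in> {lo..hi} - {lo, hi}" for t
    proof -
      have "(\<lambda>j. if j < n then rademacher (Suc j) t else 0) = sign_vector n m"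
        using that Suc.prems rademacher_dyadic_interval[of m n _ t]
        by (auto simp: lo_def hi_def sign_vector_def)
      then show ?thesis
        by (simp add: f_def)
    qed
    have "(f has_integral G (sign_vector n m) / 2^n) {lo..hi}"
      by (rule has_integral_spike_finite[where S = "{lo, hi}", OF _ pointwise const]) auto
    then have "(f has_integral (\<Sum>k<m. G (sign_vector n k)) / 2^n + G (sign_vector n m) / 2^n)
        {0..hi}"
      using Suc \<open>0 \<le> lo\<close> \<open>lo \<le> hi\<close> by (intro has_integral_combine) (auto simp: lo_def)
    moreover have "real (Suc m) / 2^n = hi"
      by (simp add: hi_def)
    ultimately show ?case
      by (simp add: add_divide_distrib)
  qed (simp add: has_integral_refl)
  from this[of "2^n"] show ?thesis
    by (simp add: sign_mean_def)
qed

lemma integral_rademacher_sum: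
  "integral {0..1} (\<lambda>t. \<bar>\<Sum>j=1..n. a j * rademacher j t\<bar> powr r)
     = sign_mean n (\<lambda>s. \<bar>\<Sum>j<n. a (Suc j) * s j\<bar> powr r)"
proof -
  have "(\<Sum>j<n. a (Suc j) * (if j < n then rademacher (Suc j) t else 0))
      = (\<Sum>j<n. a (Suc j) * rademacher (Suc j) t)" for t
    by (intro sum.cong) auto
  moreover have "(\<Sum>j=1..n. a j * rademacher j t) = (\<Sum>j<n. a (Suc j) * rademacher (Suc j) t)" for t
    using sum.atLeast1_atMost_eq[of "\<lambda>j. a j * rademacher j t" n] by simp
  ultimately show ?thesis
    using integral_unique[OF has_integral_rademacher_sign_mean[
        where G = "\<lambda>s. \<bar>\<Sum>j<n. a (Suc j) * s j\<bar> powr r" and n = n]]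
    by simp
qed

lemma khintchine_A_eq_Inf: "khintchine_A r = Inf {C. khintchine_const C r}"
proof -
  have shift: "(\<Sum>j=1..n. f j) = (\<Sum>j<n. f (Suc j))" for f :: "nat \<Rightarrow> real" and n
    using sum.atLeast1_atMost_eq[of f n] by simp
  have "(\<forall>n (a::nat \<Rightarrow> real). sqrt (\<Sum>j<n. (a (Suc j))^2)
          \<le> C * sign_mean n (\<lambda>s. \<bar>\<Sum>j<n. a (Suc j) * s j\<bar> powr r) powr (1/r))
        \<longleftrightarrow> khintchine_const C r" (is "?shifted \<longleftrightarrow> _") for C
  proof
    assume shifted: ?shifted
    show "khintchine_const C r"
      unfolding khintchine_const_def
    proof (intro allI)
      fix n and b :: "nat \<Rightarrow> real"
      show "sqrt (\<Sum>j<n. (b j)^2) \<le> C * sign_mean n (\<lambda>s. \<bar>\<Sum>j<n. b j * s j\<bar> powr r) powr (1/r)"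
        using shifted[rule_format, where n = n and a = "\<lambda>j. b (j - 1)"] by simp
    qed
  qed (auto simp: khintchine_const_def)
  then show ?thesis
    unfolding khintchine_A_def integral_rademacher_sum unfolding shift by simp
qed

lemma khintchine_const_khintchine_A:
  "1 \<le> r \<Longrightarrow> khintchine_const (khintchine_A r) r"
  unfolding khintchine_A_eq_Inf by (rule khintchine_const_Inf)

section \<open>Finite \<open>\<ell>\<^sub>s\<close>-norms and duality\<close>

definition lnorm :: "real \<Rightarrow> 'a set \<Rightarrow> ('a \<Rightarrow> real) \<Rightarrow> real" where
  "lnorm s Y v = (\<Sum>y\<in>Y. v y powr s) powr (1/s)"

lemma lnorm_nonneg: "0 \<le> lnorm s Y v"
  by (simp add: lnorm_def)

lemma lnorm_powr:
  assumes "1 \<le> s" "\<And>y. y \<in> Y \<Longrightarrow> 0 \<le> v y"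
  shows "lnorm s Y v powr s = (\<Sum>y\<in>Y. v y powr s)"
  using assms by (simp add: lnorm_def powr_powr sum_nonneg)

lemma lnorm_cmult:
  assumes "1 \<le> s" "0 \<le> c"
  shows "lnorm s Y (\<lambda>y. c * v y) = c * lnorm s Y v"
proof -
  have "(\<Sum>y\<in>Y. (c * v y) powr s) = c powr s * (\<Sum>y\<in>Y. v y powr s)"
    using assms by (simp add: powr_mult sum_distrib_left)
  then show ?thesis
    using assms by (simp add: lnorm_def powr_mult powr_powr sum_nonneg)
qed

lemma lnorm_eq_0_iff:
  assumes "finite Y" "1 \<le> s" "\<And>y. y \<in> Y \<Longrightarrow> 0 \<le> v y"
  shows "lnorm s Y v = 0 \<longleftrightarrow> (\<forall>y\<in>Y. v y = 0)"
  using assms by (simp add: lnorm_def sum_nonneg sum_nonneg_eq_0_iff)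

lemma powr_add_div_le:
  fixes a b x y s :: real
  assumes s: "1 \<le> s" and ab: "0 < a" "0 < b" and xy: "0 \<le> x" "0 \<le> y"
  shows "((x + y) / (a + b)) powr s \<le> a / (a + b) * (x / a) powr s + b / (a + b) * (y / b) powr s"
proof -
  define t where "t = b / (a + b)"
  have t: "0 < t" "t < 1" "1 - t = a / (a + b)"
    using ab by (auto simp: t_def field_simps)
  have "(x + y) / (a + b) = (1 - t) *\<^sub>R (x / a) + t *\<^sub>R (y / b)"
    using ab unfolding t(3) by (simp add: t_def add_divide_distrib)
  then have "((x + y) / (a + b)) powr s \<le> (1 - t) * (x / a) powr s + t * (y / b) powr s"
    using convex_onD[OF convex_on_powr_nonneg[OF s], of t "x / a" "y / b"] t ab xy by simp
  then show ?thesis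
    unfolding t(3) unfolding t_def .
qed

lemma lnorm_triangle:
  assumes Y: "finite Y" and s: "1 \<le> s"
    and v: "\<And>y. y \<in> Y \<Longrightarrow> 0 \<le> v y" and w: "\<And>y. y \<in> Y \<Longrightarrow> 0 \<le> w y"
  shows "lnorm s Y (\<lambda>y. v y + w y) \<le> lnorm s Y v + lnorm s Y w"
proof -
  define a b where "a = lnorm s Y v" and "b = lnorm s Y w"
  consider "a = 0" | "b = 0" | "0 < a" "0 < b"
    by (metis a_def b_def lnorm_nonneg less_eq_real_def)
  then show ?thesis
  proof cases
    case 1
    then have "lnorm s Y (\<lambda>y. v y + w y) = lnorm s Y w"
      using lnorm_eq_0_iff[OF Y s v] by (simp add: a_def lnorm_def)
    then show ?thesis
      using 1 by (simp add: a_def b_def)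
  next
    case 2
    then have "lnorm s Y (\<lambda>y. v y + w y) = lnorm s Y v"
      using lnorm_eq_0_iff[OF Y s w] by (simp add: b_def lnorm_def)
    then show ?thesis
      using 2 by (simp add: a_def b_def)
  next
    case 3
    have "(\<Sum>y\<in>Y. ((v y + w y) / (a + b)) powr s)
        \<le> (\<Sum>y\<in>Y. a / (a + b) * (v y / a) powr s + b / (a + b) * (w y / b) powr s)"
      using 3 v w by (intro sum_mono powr_add_div_le[OF s]) auto
    also have "\<dots> = a / (a + b) * ((\<Sum>y\<in>Y. v y powr s) / a powr s)
        + b / (a + b) * ((\<Sum>y\<in>Y. w y powr s) / b powr s)"
      using 3 v w by (simp add: sum.distrib sum_distrib_left powr_divide sum_divide_distrib)
    also have "(\<Sum>y\<in>Y. v y powr s) = a powr s"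
      using lnorm_powr[of s Y v, OF s v] by (simp add: a_def)
    also have "(\<Sum>y\<in>Y. w y powr s) = b powr s"
      using lnorm_powr[of s Y w, OF s w] by (simp add: b_def)
    also have "a / (a + b) * (a powr s / a powr s) + b / (a + b) * (b powr s / b powr s) = 1"
      using 3 by (simp add: add_divide_distrib[symmetric])
    finally have "(\<Sum>y\<in>Y. (v y + w y) powr s) / (a + b) powr s \<le> 1"
      using 3 v w by (simp add: powr_divide sum_divide_distrib)
    then have "(\<Sum>y\<in>Y. (v y + w y) powr s) \<le> (a + b) powr s"
      using 3 by (simp add: divide_le_eq)
    then have "(\<Sum>y\<in>Y. (v y + w y) powr s) powr (1/s) \<le> ((a + b) powr s) powr (1/s)"
      using s by (intro powr_mono2) (auto simp: sum_nonneg)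
    then show ?thesis
      using 3 s by (simp add: powr_powr a_def b_def lnorm_def)
  qed
qed

lemma lnorm_sum_le:
  assumes "finite Y" "finite P" "1 \<le> s"
    and "\<And>y k. y \<in> Y \<Longrightarrow> k \<in> P \<Longrightarrow> 0 \<le> g y k" and "\<And>k. k \<in> P \<Longrightarrow> 0 \<le> c k"
  shows "lnorm s Y (\<lambda>y. \<Sum>k\<in>P. c k * g y k) \<le> (\<Sum>k\<in>P. c k * lnorm s Y (\<lambda>y. g y k))"
  using assms(2,4,5)
proof (induction P rule: finite_induct)
  case (insert k P)
  have "lnorm s Y (\<lambda>y. \<Sum>k\<in>insert k P. c k * g y k)
      = lnorm s Y (\<lambda>y. c k * g y k + (\<Sum>k\<in>P. c k * g y k))"
    using insert by simp
  also have "\<dots> \<le> lnorm s Y (\<lambda>y. c k * g y k) + lnorm s Y (\<lambda>y. \<Sum>k\<in>P. c k * g y k)"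
    using insert by (intro lnorm_triangle[OF assms(1,3)]) (auto intro!: sum_nonneg)
  also have "\<dots> \<le> c k * lnorm s Y (\<lambda>y. g y k) + (\<Sum>k\<in>P. c k * lnorm s Y (\<lambda>y. g y k))"
    using insert by (simp add: lnorm_cmult[OF assms(3)])
  finally show ?case
    using insert by simp
qed (simp add: lnorm_def)

lemma lnorm_abs_powr:
  assumes "0 < r"
  shows "lnorm (2/r) Y (\<lambda>y. \<bar>b y\<bar> powr r) = sqrt (\<Sum>y\<in>Y. (b y)^2) powr r"
proof -
  have "(\<bar>b y\<bar> powr r) powr (2/r) = (b y)^2" for y
    using assms by (simp add: powr_powr powr_numeral)
  then show ?thesis
    using assms by (simp add: lnorm_def sum_nonneg powr_half_sqrt[symmetric] powr_powr)
qed

lemma conj_exp_bounds: "2 \<le> p \<Longrightarrow> 1 \<le> conj_exp p \<and> conj_exp p \<le> 2"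
  by (cases p) (auto simp: conj_exp_def field_simps)

lemma powr_diff_one_mult: "0 \<le> x \<Longrightarrow> x powr (q - 1) * x = x powr (q::real)"
  using powr_add[of x "q - 1" 1] by (cases "x = 0") simp_all

lemma sum_abs_le_of_dual_bound:
  fixes b :: "nat \<Rightarrow> real"
  assumes "\<And>c. (\<And>i. \<bar>c i\<bar> \<le> 1) \<Longrightarrow> \<bar>\<Sum>i<N. c i * b i\<bar> \<le> F"
  shows "(\<Sum>i<N. \<bar>b i\<bar>) \<le> F"
proof -
  have "sgn (b i) * b i = \<bar>b i\<bar>" for i
    by (simp add: abs_sgn mult.commute)
  then show ?thesis
    using assms[of "\<lambda>i. sgn (b i)"] by (simp add: abs_sgn_eq)
qed

text \<open>The extremal sequence is \<open>c\<^sub>i = sgn b\<^sub>i |b\<^sub>i|\<^bsup>q-1\<^esup> / S\<^bsup>1/P\<^esup>\<close> with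
  \<open>q = P/(P - 1)\<close> and \<open>S = \<Sum>|b\<^sub>i|\<^sup>q\<close>: it has \<open>\<ell>\<^sub>P\<close>-norm one and pairs with \<open>b\<close> to \<open>S\<^bsup>1/q\<^esup>\<close>.\<close>
lemma sum_abs_powr_le_of_dual_bound:
  fixes b :: "nat \<Rightarrow> real"
  assumes P: "1 < P"
    and dual: "\<And>c. (\<Sum>i<N. \<bar>c i\<bar> powr P) \<le> 1 \<Longrightarrow> \<bar>\<Sum>i<N. c i * b i\<bar> \<le> F"
  shows "(\<Sum>i<N. \<bar>b i\<bar> powr (P / (P - 1))) \<le> F powr (P / (P - 1))"
proof -
  define q where "q = P / (P - 1)"
  have q: "1 < q" "(q - 1) * P = q" "1 - 1 / P = 1 / q"
    using P by (simp_all add: q_def field_simps)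
  define S where "S = (\<Sum>i<N. \<bar>b i\<bar> powr q)"
  show ?thesis
  proof (cases "S = 0")
    case True
    then show ?thesis
      by (simp add: S_def q_def)
  next
    case False
    then have S: "0 < S"
      by (simp add: S_def order_less_le sum_nonneg)
    define c where "c i = sgn (b i) * \<bar>b i\<bar> powr (q - 1) / S powr (1/P)" for i
    have "c i * b i = \<bar>b i\<bar> powr q / S powr (1/P)" for i
    proof -
      have "c i * b i = \<bar>b i\<bar> powr (q - 1) * \<bar>b i\<bar> / S powr (1/P)"
        by (simp add: c_def abs_sgn mult_ac)
      then show ?thesis
        by (simp add: powr_diff_one_mult)
    qed
    then have "(\<Sum>i<N. c i * b i) = S / S powr (1/P)"
      by (simp add: S_def sum_divide_distrib[symmetric])
    also have "\<dots> = S powr (1 - 1/P)"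
      using S by (simp add: powr_diff)
    finally have "(\<Sum>i<N. c i * b i) = S powr (1/q)"
      by (simp only: q(3))
    moreover have "\<bar>c i\<bar> powr P = \<bar>b i\<bar> powr q / S" for i
      using P S q(2) by (simp add: c_def abs_mult powr_divide powr_powr abs_sgn_eq)
    then have "(\<Sum>i<N. \<bar>c i\<bar> powr P) = 1"
      using S by (simp add: S_def sum_divide_distrib[symmetric])
    ultimately have "S powr (1/q) \<le> F"
      using dual[of c] by simp
    then have "(S powr (1/q)) powr q \<le> F powr q"
      using S q(1) by (intro powr_mono2) auto
    then have "S \<le> F powr q"
      using q(1) S by (simp add: powr_powr)
    then show ?thesis
      unfolding S_def q_def .
  qed
qed

lemma power2_powr_half: "((x::real)^2) powr (r/2) = \<bar>x\<bar> powr r"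
proof -
  have "x^2 = \<bar>x\<bar> powr 2"
    by (simp add: powr_numeral)
  then have "(x^2) powr (r/2) = (\<bar>x\<bar> powr 2) powr (r/2)"
    by (rule arg_cong)
  also have "\<dots> = \<bar>x\<bar> powr r"
    by (simp only: powr_powr) simp
  finally show ?thesis .
qed

lemma power_powr_comm:
  fixes C :: real
  assumes "0 < C"
  shows "(C powr r) ^ n = (C ^ n) powr r"
  using assms by (simp add: powr_power powr_realpow[symmetric] powr_powr mult.commute)

section \<open>Multilinear forms on sequence spaces\<close>

definition finitely_supported :: "(nat \<Rightarrow> real) \<Rightarrow> bool" where
  "finitely_supported x \<longleftrightarrow> (\<exists>N. \<forall>n\<ge>N. x n = 0)"

lemma finitely_supported_unit_vec: "finitely_supported (unit_vec i)"
  unfolding finitely_supported_def unit_vec_def by (rule exI[of _ "Suc i"]) auto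

lemma finitely_supported_sign_vector: "finitely_supported (sign_vector n k)"
  unfolding finitely_supported_def sign_vector_def by (rule exI[of _ n]) auto

lemma finitely_supported_sum:
  assumes "finite J" "\<And>j. j \<in> J \<Longrightarrow> finitely_supported (u j)"
  shows "finitely_supported (\<lambda>n. \<Sum>j\<in>J. c j * u j n)"
  using assms
proof (induction J rule: finite_induct)
  case (insert j J)
  then obtain N1 N2 where "\<forall>n\<ge>N1. u j n = 0" "\<forall>n\<ge>N2. (\<Sum>j\<in>J. c j * u j n) = 0"
    unfolding finitely_supported_def by blast
  then have "\<forall>n\<ge>max N1 N2. (\<Sum>j\<in>insert j J. c j * u j n) = 0"
    using insert(1,2) by simp
  then show ?case
    unfolding finitely_supported_def by blast
qed (simp add: finitely_supported_def)

lemma finitely_supported_Xspace: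
  assumes "finitely_supported x"
  shows "x \<in> Xspace p"
proof -
  obtain N where N: "\<forall>n\<ge>N. x n = 0"
    using assms unfolding finitely_supported_def by blast
  then have "x \<longlonglongrightarrow> 0"
    by (intro tendsto_eventually) (auto simp: eventually_sequentially)
  moreover have "summable (\<lambda>n. \<bar>x n\<bar> powr real_of_ereal p)"
    using N by (intro summable_finite[of "{..<N}"]) auto
  ultimately show ?thesis
    by (simp add: Xspace_def)
qed

lemma Xnorm_finitely_supported:
  assumes "p \<noteq> \<infinity>" "\<forall>n\<ge>N. x n = 0" "0 < real_of_ereal p"
  shows "Xnorm p x = (\<Sum>n<N. \<bar>x n\<bar> powr real_of_ereal p) powr (1 / real_of_ereal p)"
proof -
  have "(\<Sum>n. \<bar>x n\<bar> powr real_of_ereal p) = (\<Sum>n<N. \<bar>x n\<bar> powr real_of_ereal p)"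
    using assms by (intro suminf_finite) auto
  then show ?thesis
    using assms by (simp add: Xnorm_def)
qed

lemma Xnorm_infinity_le_1:
  "(\<And>n. \<bar>x n\<bar> \<le> 1) \<Longrightarrow> Xnorm \<infinity> x \<le> 1"
  unfolding Xnorm_def by (simp add: cSUP_least)

lemma Xspace_cmult:
  assumes "x \<in> Xspace p"
  shows "(\<lambda>n. c * x n) \<in> Xspace p"
proof (cases "p = \<infinity>")
  case False
  then have "summable (\<lambda>n. \<bar>c\<bar> powr real_of_ereal p * \<bar>x n\<bar> powr real_of_ereal p)"
    using assms by (intro summable_mult) (simp add: Xspace_def)
  then show ?thesis
    using False by (simp add: Xspace_def abs_mult powr_mult)
qed (use assms in \<open>simp add: Xspace_def tendsto_mult_right_zero\<close>)

lemma Xnorm_cmult_le: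
  assumes "x \<in> Xspace p" "0 < c" "p \<noteq> \<infinity> \<Longrightarrow> 0 < real_of_ereal p"
  shows "Xnorm p (\<lambda>n. c * x n) \<le> c * Xnorm p x"
proof (cases "p = \<infinity>")
  case True
  then have "bounded (range x)"
    using assms(1) by (intro convergent_imp_bounded) (auto simp: Xspace_def convergent_def)
  then have "bdd_above (range (\<lambda>n. \<bar>x n\<bar>))"
    by (auto simp: bounded_iff bdd_above_def)
  then have "\<bar>c * x n\<bar> \<le> c * (SUP n. \<bar>x n\<bar>)" for n
    using assms(2) cSUP_upper[of n UNIV "\<lambda>n. \<bar>x n\<bar>"] by (simp add: abs_mult)
  then show ?thesis
    using True by (simp add: Xnorm_def cSUP_least)
next
  case False
  define P where "P = real_of_ereal p"
  have P: "0 < P" and sm: "summable (\<lambda>n. \<bar>x n\<bar> powr P)"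
    using assms False by (simp_all add: P_def Xspace_def)
  have "(\<Sum>n. \<bar>c * x n\<bar> powr P) = c powr P * (\<Sum>n. \<bar>x n\<bar> powr P)"
    using assms(2) suminf_mult[OF sm] by (simp add: abs_mult powr_mult)
  then have "Xnorm p (\<lambda>n. c * x n) = (c powr P * (\<Sum>n. \<bar>x n\<bar> powr P)) powr (1/P)"
    using False by (simp add: Xnorm_def P_def)
  also have "(c powr P * (\<Sum>n. \<bar>x n\<bar> powr P)) powr (1/P)
      = (c powr P) powr (1/P) * (\<Sum>n. \<bar>x n\<bar> powr P) powr (1/P)"
    by (rule powr_mult)
  also have "(c powr P) powr (1/P) = c"
    using P assms(2) by (simp add: powr_powr)
  finally show ?thesis
    using False by (simp add: Xnorm_def P_def)
qed

lemma mdom_zero: "(\<lambda>k n. 0) \<in> mdom M ps"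
  unfolding mdom_def using finitely_supported_Xspace[of "\<lambda>n. 0"] by (auto simp: finitely_supported_def)

lemma sum_PiE_insert:
  assumes "x \<notin> S" "finite S" "\<And>i. finite (B i)"
  shows "(\<Sum>f\<in>PiE (insert x S) B. F f) = (\<Sum>y\<in>B x. \<Sum>g\<in>PiE S B. F (g(x := y)))"
proof -
  have "(\<Sum>f\<in>PiE (insert x S) B. F f) = (\<Sum>(y, g)\<in>B x \<times> PiE S B. F (g(x := y)))"
    unfolding PiE_insert_eq using inj_combinator[OF assms(1)]
    by (subst sum.reindex) (simp_all add: case_prod_unfold)
  also have "\<dots> = (\<Sum>y\<in>B x. \<Sum>g\<in>PiE S B. F (g(x := y)))"
    by (rule sum.cartesian_product[symmetric])
  finally show ?thesis .
qed

lemma sum_unit_vec: "(\<Sum>i<N. c i * unit_vec i n) = (if n < N then c n else 0)"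
  by (simp add: unit_vec_def if_distrib[of "(*) _"] sum.delta cong: if_cong)

lemma sign_vector_eq_sum_unit_vec: "sign_vector N k = (\<lambda>n. \<Sum>y<N. sign_vector N k y * unit_vec y n)"
  by (auto simp: sum_unit_vec sign_vector_def)

definition with_units :: "(nat \<Rightarrow> nat \<Rightarrow> real) \<Rightarrow> nat set \<Rightarrow> (nat \<Rightarrow> nat) \<Rightarrow> nat \<Rightarrow> nat \<Rightarrow> real" where
  "with_units z K j = (\<lambda>k. if k \<in> K then unit_vec (j k) else z k)"

definition with_signs :: "nat \<Rightarrow> (nat \<Rightarrow> nat \<Rightarrow> real) \<Rightarrow> nat set \<Rightarrow> (nat \<Rightarrow> nat) \<Rightarrow> nat \<Rightarrow> nat \<Rightarrow> real" where
  "with_signs N z K \<kappa> = (\<lambda>k. if k \<in> K then sign_vector N (\<kappa> k) else z k)"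

text \<open>\<open>\<kappa> k < 2\<^sup>N\<close> selects the sign vector that \<open>with_signs\<close> places into coordinate \<open>k \<in> K\<close>.\<close>
definition multi_sign_mean :: "nat \<Rightarrow> nat set \<Rightarrow> ((nat \<Rightarrow> nat) \<Rightarrow> real) \<Rightarrow> real" where
  "multi_sign_mean N K F = (\<Sum>\<kappa>\<in>PiE K (\<lambda>_. {..<2^N}). F \<kappa>) / (2^N)^card K"

lemma with_units_insert:
  "a \<notin> K \<Longrightarrow> with_units z (insert a K) (j(a := y)) = with_units (z(a := unit_vec y)) K j"
  unfolding with_units_def by (auto simp: fun_eq_iff)

lemma with_signs_insert:
  "a \<notin> K \<Longrightarrow> with_signs N z (insert a K) (\<kappa>(a := k)) = (with_signs N z K \<kappa>)(a := sign_vector N k)"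
  unfolding with_signs_def by (auto simp: fun_eq_iff)

lemma with_signs_fun_upd:
  "a \<notin> K \<Longrightarrow> with_signs N (z(a := v)) K \<kappa> = (with_signs N z K \<kappa>)(a := v)"
  unfolding with_signs_def by (auto simp: fun_eq_iff)

lemma multi_sign_mean_empty: "multi_sign_mean N {} F = F (\<lambda>_. undefined)"
  by (simp add: multi_sign_mean_def)

lemma multi_sign_mean_insert:
  assumes "a \<notin> K" "finite K"
  shows "multi_sign_mean N (insert a K) F
           = multi_sign_mean N K (\<lambda>\<kappa>. (\<Sum>k<2^N. F (\<kappa>(a := k))) / 2^N)"
proof -
  have "(\<Sum>\<kappa>\<in>PiE (insert a K) (\<lambda>_. {..<2^N}). F \<kappa>) = (\<Sum>\<kappa>\<in>PiE K (\<lambda>_. {..<2^N}). \<Sum>k<2^N. F (\<kappa>(a := k)))"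
    using assms by (simp add: sum_PiE_insert sum.swap[where A = "{..<2^N}"])
  then show ?thesis
    using assms by (simp add: multi_sign_mean_def sum_divide_distrib[symmetric] divide_divide_eq_left mult.commute)
qed

lemma multi_sign_mean_const: "finite K \<Longrightarrow> multi_sign_mean N K (\<lambda>_. c) = c"
  by (simp add: multi_sign_mean_def card_PiE)

lemma multi_sign_mean_mono:
  "(\<And>\<kappa>. \<kappa> \<in> PiE K (\<lambda>_. {..<2^N}) \<Longrightarrow> F \<kappa> \<le> G \<kappa>) \<Longrightarrow> multi_sign_mean N K F \<le> multi_sign_mean N K G"
  unfolding multi_sign_mean_def by (intro divide_right_mono sum_mono) auto

lemma multi_sign_mean_nonneg: "(\<And>\<kappa>. 0 \<le> F \<kappa>) \<Longrightarrow> 0 \<le> multi_sign_mean N K F"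
  unfolding multi_sign_mean_def by (intro divide_nonneg_nonneg sum_nonneg) auto

lemma multi_sign_mean_sum:
  "multi_sign_mean N K (\<lambda>\<kappa>. \<Sum>i\<in>I. F i \<kappa>) = (\<Sum>i\<in>I. multi_sign_mean N K (F i))"
  unfolding multi_sign_mean_def by (simp add: sum.swap[of _ I] sum_divide_distrib)

locale multilinear_functional =
  fixes M :: nat and ps :: "nat \<Rightarrow> ereal" and T :: "(nat \<Rightarrow> nat \<Rightarrow> real) \<Rightarrow> real"
  assumes multilinear: "multilinear_form M ps T"
begin

lemma mdom_fun_upd: "x \<in> mdom M ps \<Longrightarrow> k < M \<Longrightarrow> u \<in> Xspace (ps k) \<Longrightarrow> x(k := u) \<in> mdom M ps"
  unfolding mdom_def by auto

lemma linear_in_coordinate: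
  "x \<in> mdom M ps \<Longrightarrow> k < M \<Longrightarrow> u \<in> Xspace (ps k) \<Longrightarrow> v \<in> Xspace (ps k) \<Longrightarrow>
     T (x(k := (\<lambda>n. a * u n + b * v n))) = a * T (x(k := u)) + b * T (x(k := v))"
  using multilinear unfolding multilinear_form_def by blast

lemma sum_in_coordinate:
  assumes x: "x \<in> mdom M ps" and k: "k < M" and J: "finite J"
    and u: "\<And>j. j \<in> J \<Longrightarrow> finitely_supported (u j)"
  shows "T (x(k := (\<lambda>n. \<Sum>j\<in>J. c j * u j n))) = (\<Sum>j\<in>J. c j * T (x(k := u j)))"
  using J u
proof (induction J rule: finite_induct)
  case empty
  have "T (x(k := (\<lambda>n. 0 * 0 + 0 * 0))) = 0 * T (x(k := (\<lambda>n. 0))) + 0 * T (x(k := (\<lambda>n. 0)))"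
    using finitely_supported_Xspace[of "\<lambda>n. 0"]
    by (intro linear_in_coordinate[OF x k]) (auto simp: finitely_supported_def)
  then have "T (x(k := (\<lambda>n. 0))) = 0"
    by simp
  then show ?case
    by (simp only: sum.empty)
next
  case (insert j J)
  have "(\<lambda>n. \<Sum>j\<in>insert j J. c j * u j n) = (\<lambda>n. c j * u j n + 1 * (\<Sum>j\<in>J. c j * u j n))"
    using insert(1,2) by simp
  moreover have "T (x(k := (\<lambda>n. c j * u j n + 1 * (\<Sum>j\<in>J. c j * u j n))))
      = c j * T (x(k := u j)) + 1 * T (x(k := (\<lambda>n. \<Sum>j\<in>J. c j * u j n)))"
    using insert by (intro linear_in_coordinate[OF x k] finitely_supported_Xspace finitely_supported_sum) auto
  moreover have "T (x(k := (\<lambda>n. \<Sum>j\<in>J. c j * u j n))) = (\<Sum>j\<in>J. c j * T (x(k := u j)))"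
    using insert by blast
  ultimately show ?case
    by (simp only: sum.insert[OF insert(1,2)] mult_1)
qed

lemma scale_coordinates:
  assumes x: "x \<in> mdom M ps" and m: "m \<le> M"
  shows "(\<lambda>k n. if k < m then c * x k n else x k n) \<in> mdom M ps
       \<and> T (\<lambda>k n. if k < m then c * x k n else x k n) = c^m * T x"
  using m
proof (induction m)
  case (Suc m)
  define y where "y = (\<lambda>k n. if k < m then c * x k n else x k n)"
  have y: "y \<in> mdom M ps" "T y = c^m * T x"
    using Suc by (auto simp: y_def)
  have xm: "x m \<in> Xspace (ps m)"
    using x Suc.prems by (auto simp: mdom_def)
  have m: "m < M"
    using Suc.prems by simp
  have "(\<lambda>k n. if k < Suc m then c * x k n else x k n) = y(m := (\<lambda>n. c * x m n + 0 * x m n))"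
    by (auto simp: y_def fun_eq_iff)
  moreover have "y(m := (\<lambda>n. c * x m n + 0 * x m n)) \<in> mdom M ps"
    using Xspace_cmult[OF xm, of c] by (intro mdom_fun_upd[OF y(1) m]) simp
  moreover have "T (y(m := (\<lambda>n. c * x m n + 0 * x m n))) = c * T (y(m := x m))"
    using linear_in_coordinate[OF y(1) m xm xm, of c 0] by simp
  moreover have "y(m := x m) = y"
    by (auto simp: y_def)
  ultimately show ?case
    using y(2) by simp
qed (use x in simp)

lemma with_signs_mdom: "z \<in> mdom M ps \<Longrightarrow> K \<subseteq> {..<M} \<Longrightarrow> with_signs N z K \<kappa> \<in> mdom M ps"
  unfolding mdom_def with_signs_def using finitely_supported_Xspace[OF finitely_supported_sign_vector] by auto

lemma khintchine_in_coordinate: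
  assumes C: "khintchine_const C r" and x: "x \<in> mdom M ps" and a: "a < M"
  shows "sqrt (\<Sum>y<N. (T (x(a := unit_vec y)))^2)
           \<le> C * sign_mean N (\<lambda>s. \<bar>T (x(a := s))\<bar> powr r) powr (1/r)"
proof -
  have "T (x(a := sign_vector N k)) = (\<Sum>y<N. T (x(a := unit_vec y)) * sign_vector N k y)" for k
    by (subst sign_vector_eq_sum_unit_vec, subst sum_in_coordinate[OF x a])
       (auto simp: finitely_supported_unit_vec mult.commute)
  then have "sign_mean N (\<lambda>s. \<bar>\<Sum>y<N. T (x(a := unit_vec y)) * s y\<bar> powr r)
      = sign_mean N (\<lambda>s. \<bar>T (x(a := s))\<bar> powr r)"
    by (intro sign_mean_cong) simp
  then show ?thesis
    using khintchine_constD[OF C, where a = "\<lambda>y. T (x(a := unit_vec y))" and n = N] by simp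
qed

text \<open>Minkowski's inequality in \<open>\<ell>\<^bsub>2/r\<^esub>\<close> (this needs \<open>r \<le> 2\<close>) moves the sum over the new
  coordinate \<open>a\<close> inside the average over the signs in \<open>K\<close>; there Khintchine's inequality in
  coordinate \<open>a\<close> replaces it by an average over one more sign vector.\<close>
lemma khintchine_minkowski_step:
  assumes C: "khintchine_const C r" and r: "1 \<le> r" "r \<le> 2"
    and K: "finite K" "K \<subseteq> {..<M}" and a: "a < M" "a \<notin> K" and z: "z \<in> mdom M ps"
  shows "lnorm (2/r) {..<N} (\<lambda>y. multi_sign_mean N K (\<lambda>\<kappa>. \<bar>T (with_signs N (z(a := unit_vec y)) K \<kappa>)\<bar> powr r))
           \<le> C powr r * multi_sign_mean N (insert a K) (\<lambda>\<kappa>. \<bar>T (with_signs N z (insert a K) \<kappa>)\<bar> powr r)"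
proof -
  define q where "q = 2 / r"
  have q: "1 \<le> q"
    using r by (simp add: q_def)
  define P where "P = PiE K (\<lambda>_. {..<(2::nat)^N})"
  define w :: real where "w = 1 / (2^N)^card K"
  define X where "X \<kappa> = with_signs N z K \<kappa>" for \<kappa>
  define E where "E \<kappa> = sign_mean N (\<lambda>s. \<bar>T ((X \<kappa>)(a := s))\<bar> powr r)" for \<kappa>
  have "lnorm q {..<N} (\<lambda>y. multi_sign_mean N K (\<lambda>\<kappa>. \<bar>T (with_signs N (z(a := unit_vec y)) K \<kappa>)\<bar> powr r))
      = lnorm q {..<N} (\<lambda>y. \<Sum>\<kappa>\<in>P. w * \<bar>T ((X \<kappa>)(a := unit_vec y))\<bar> powr r)"
    using a by (simp add: multi_sign_mean_def P_def w_def X_def with_signs_fun_upd sum_divide_distrib)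
  also have "\<dots> \<le> (\<Sum>\<kappa>\<in>P. w * lnorm q {..<N} (\<lambda>y. \<bar>T ((X \<kappa>)(a := unit_vec y))\<bar> powr r))"
    using K q by (intro lnorm_sum_le) (auto simp: P_def w_def intro!: finite_PiE)
  also have "\<dots> \<le> (\<Sum>\<kappa>\<in>P. w * (C powr r * E \<kappa>))"
  proof (intro sum_mono mult_left_mono)
    fix \<kappa>
    have "0 \<le> C"
      using khintchine_const_ge_1[OF C] r by simp
    moreover have "X \<kappa> \<in> mdom M ps"
      unfolding X_def using K(2) z by (intro with_signs_mdom)
    ultimately have "sqrt (\<Sum>y<N. (T ((X \<kappa>)(a := unit_vec y)))^2) powr r \<le> (C * E \<kappa> powr (1/r)) powr r"
      using khintchine_in_coordinate[OF C _ a(1)] r by (intro powr_mono2) (auto simp: E_def sum_nonneg)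
    also have "\<dots> = C powr r * E \<kappa>"
      using r \<open>0 \<le> C\<close> by (simp add: powr_mult powr_powr E_def sign_mean_nonneg)
    finally show "lnorm q {..<N} (\<lambda>y. \<bar>T ((X \<kappa>)(a := unit_vec y))\<bar> powr r) \<le> C powr r * E \<kappa>"
      using r by (simp add: q_def lnorm_abs_powr)
  qed (simp add: w_def)
  also have "\<dots> = C powr r * multi_sign_mean N K (\<lambda>\<kappa>. (\<Sum>k<2^N. \<bar>T (with_signs N z (insert a K) (\<kappa>(a := k)))\<bar> powr r) / 2^N)"
    by (simp add: E_def X_def sign_mean_def with_signs_insert[OF a(2)] multi_sign_mean_def P_def w_def
        sum_distrib_left sum_divide_distrib mult_ac)
  also have "\<dots> = C powr r * multi_sign_mean N (insert a K) (\<lambda>\<kappa>. \<bar>T (with_signs N z (insert a K) \<kappa>)\<bar> powr r)"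
    using K a by (simp add: multi_sign_mean_insert)
  finally show ?thesis
    by (simp add: q_def)
qed

lemma multiple_khintchine:
  assumes C: "khintchine_const C r" and r: "1 \<le> r" "r \<le> 2"
    and K: "finite K" "K \<subseteq> {..<M}" and z: "z \<in> mdom M ps"
  shows "(\<Sum>j\<in>PiE K (\<lambda>_. {..<N}). (T (with_units z K j))^2) powr (r/2)
           \<le> (C powr r) ^ card K * multi_sign_mean N K (\<lambda>\<kappa>. \<bar>T (with_signs N z K \<kappa>)\<bar> powr r)"
  using K z
proof (induction K arbitrary: z rule: finite_induct)
  case empty
  show ?case
    by (simp add: with_units_def with_signs_def multi_sign_mean_empty power2_powr_half)
next
  case (insert a K)
  define q where "q = 2 / r"
  have q: "1 \<le> q" "r/2 = 1/q"
    using r by (simp_all add: q_def)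
  define D where "D = (C powr r) ^ card K"
  define A where "A y = multi_sign_mean N K (\<lambda>\<kappa>. \<bar>T (with_signs N (z(a := unit_vec y)) K \<kappa>)\<bar> powr r)" for y
  define L where "L y = (\<Sum>j\<in>PiE K (\<lambda>_. {..<N}). (T (with_units (z(a := unit_vec y)) K j))^2)" for y
  have A: "0 \<le> A y" for y
    by (simp add: A_def multi_sign_mean_nonneg)
  have L: "L y \<le> (D * A y) powr q" for y
  proof -
    have "z(a := unit_vec y) \<in> mdom M ps"
      using insert finitely_supported_Xspace[OF finitely_supported_unit_vec] by (intro mdom_fun_upd) auto
    then have "L y powr (r/2) \<le> D * A y"
      using insert by (simp add: L_def A_def D_def)
    then have "(L y powr (r/2)) powr q \<le> (D * A y) powr q"
      using q by (intro powr_mono2) auto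
    then show ?thesis
      using q by (simp add: L_def powr_powr sum_nonneg)
  qed
  have "(\<Sum>j\<in>PiE (insert a K) (\<lambda>_. {..<N}). (T (with_units z (insert a K) j))^2) = (\<Sum>y<N. L y)"
    using insert by (simp add: sum_PiE_insert L_def with_units_insert)
  also have "\<dots> \<le> (\<Sum>y<N. (D * A y) powr q)"
    by (intro sum_mono L)
  finally have "(\<Sum>j\<in>PiE (insert a K) (\<lambda>_. {..<N}). (T (with_units z (insert a K) j))^2) powr (r/2)
      \<le> lnorm q {..<N} (\<lambda>y. D * A y)"
    using q r by (auto simp: lnorm_def intro!: powr_mono2 sum_nonneg)
  also have "\<dots> = D * lnorm q {..<N} A"
    using q by (simp add: lnorm_cmult D_def)
  also have "\<dots> \<le> D * (C powr r * multi_sign_mean N (insert a K) (\<lambda>\<kappa>. \<bar>T (with_signs N z (insert a K) \<kappa>)\<bar> powr r))"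
    using khintchine_minkowski_step[OF C r insert(1) _ _ insert(2)] insert
    by (intro mult_left_mono) (auto simp: A_def[abs_def] D_def q_def)
  finally show ?case
    using insert by (simp add: D_def mult_ac)
qed

end

locale bounded_multilinear_functional = multilinear_functional +
  assumes continuous: "continuous_form M ps T"
    and exponent_pos: "\<And>k. k < M \<Longrightarrow> ps k \<noteq> \<infinity> \<Longrightarrow> 0 < real_of_ereal (ps k)"
begin

lemma bounded_on_unit_ball: "\<exists>B. \<forall>x\<in>mdom M ps. (\<forall>k<M. Xnorm (ps k) (x k) \<le> 1) \<longrightarrow> \<bar>T x\<bar> \<le> B"
proof -
  have "\<forall>\<epsilon>>0. \<exists>\<delta>>0. \<forall>y\<in>mdom M ps.
      (\<forall>k<M. Xnorm (ps k) (\<lambda>n. y k n - 0) < \<delta>) \<longrightarrow> \<bar>T y - T (\<lambda>k n. 0)\<bar> < \<epsilon>"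
    using continuous mdom_zero unfolding continuous_form_def by (rule bspec)
  then have "\<forall>\<epsilon>>0. \<exists>\<delta>>0. \<forall>y\<in>mdom M ps.
      (\<forall>k<M. Xnorm (ps k) (y k) < \<delta>) \<longrightarrow> \<bar>T y - T (\<lambda>k n. 0)\<bar> < \<epsilon>"
    by simp
  then obtain \<delta> where \<delta>: "\<delta> > 0" and near_zero:
    "\<forall>y\<in>mdom M ps. (\<forall>k<M. Xnorm (ps k) (y k) < \<delta>) \<longrightarrow> \<bar>T y - T (\<lambda>k n. 0)\<bar> < 1"
    using zero_less_one by blast
  define c where "c = \<delta> / 2"
  have c: "0 < c" "c < \<delta>"
    using \<delta> by (auto simp: c_def)
  have "\<bar>T x\<bar> \<le> (1 + \<bar>T (\<lambda>k n. 0)\<bar>) / c^M"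
    if x: "x \<in> mdom M ps" and unit: "\<forall>k<M. Xnorm (ps k) (x k) \<le> 1" for x
  proof -
    define y where "y = (\<lambda>k n. if k < M then c * x k n else x k n)"
    have y: "y \<in> mdom M ps" "T y = c^M * T x"
      using scale_coordinates[OF x, of M c] by (simp_all add: y_def)
    have "Xnorm (ps k) (y k) < \<delta>" if k: "k < M" for k
    proof -
      have "Xnorm (ps k) (y k) \<le> c * Xnorm (ps k) (x k)"
        using x k c(1) exponent_pos[OF k] Xnorm_cmult_le[of "x k" "ps k" c]
        by (auto simp: y_def mdom_def)
      also have "\<dots> \<le> c"
        using unit k c by (simp add: mult_left_le)
      finally show ?thesis
        using c by simp
    qed
    then have "\<bar>T y - T (\<lambda>k n. 0)\<bar> < 1"
      using near_zero y(1) by blast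
    then have "\<bar>T y\<bar> < 1 + \<bar>T (\<lambda>k n. 0)\<bar>"
      by linarith
    then show ?thesis
      using y c by (simp add: abs_mult field_simps)
  qed
  then show ?thesis
    by blast
qed

lemma abs_le_form_norm:
  assumes "x \<in> mdom M ps" "\<forall>k<M. Xnorm (ps k) (x k) \<le> 1"
  shows "\<bar>T x\<bar> \<le> form_norm M ps T"
proof -
  obtain B where "\<forall>x\<in>mdom M ps. (\<forall>k<M. Xnorm (ps k) (x k) \<le> 1) \<longrightarrow> \<bar>T x\<bar> \<le> B"
    using bounded_on_unit_ball by blast
  then have "bdd_above ((\<lambda>x. \<bar>T x\<bar>) ` {x\<in>mdom M ps. \<forall>k<M. Xnorm (ps k) (x k) \<le> 1})"
    by (auto intro!: bdd_aboveI)
  then show ?thesis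
    unfolding form_norm_def using assms by (intro cSUP_upper) auto
qed

lemma form_norm_nonneg: "0 \<le> form_norm M ps T"
  using abs_le_form_norm[OF mdom_zero] by (force simp: Xnorm_def)

end

abbreviation lp_c0_exponents :: "ereal \<Rightarrow> nat \<Rightarrow> ereal" where
  "lp_c0_exponents p \<equiv> \<lambda>k. if k = 0 then p else \<infinity>"

locale lp_c0_functional = bounded_multilinear_functional M "lp_c0_exponents p" T for M p T +
  assumes M_pos: "1 \<le> M" and p_ge_2: "2 \<le> p"
begin

lemma sum_powr_conj_exp_le_form_norm:
  assumes x: "x \<in> mdom M (lp_c0_exponents p)" and sup: "\<forall>k<M. 0 < k \<longrightarrow> Xnorm \<infinity> (x k) \<le> 1"
  shows "(\<Sum>i<N. \<bar>T (x(0 := unit_vec i))\<bar> powr conj_exp p)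
           \<le> form_norm M (lp_c0_exponents p) T powr conj_exp p"
proof -
  define b where "b i = T (x(0 := unit_vec i))" for i
  define F where "F = form_norm M (lp_c0_exponents p) T"
  have dual: "\<bar>\<Sum>i<N. c i * b i\<bar> \<le> F" if "Xnorm p (\<lambda>n. \<Sum>i<N. c i * unit_vec i n) \<le> 1" for c
  proof -
    let ?u = "\<lambda>n. \<Sum>i<N. c i * unit_vec i n"
    have u: "finitely_supported ?u"
      by (intro finitely_supported_sum) (simp_all add: finitely_supported_unit_vec)
    have "T (x(0 := ?u)) = (\<Sum>i<N. c i * b i)"
      using M_pos by (simp add: b_def sum_in_coordinate[OF x] finitely_supported_unit_vec)
    moreover have "x(0 := ?u) \<in> mdom M (lp_c0_exponents p)"
      using M_pos by (intro mdom_fun_upd[OF x] finitely_supported_Xspace[OF u]) auto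
    ultimately show ?thesis
      using abs_le_form_norm[of "x(0 := ?u)"] that sup by (simp add: F_def)
  qed
  consider "p = \<infinity>" | P where "p = ereal P" "2 \<le> P"
    using p_ge_2 by (cases p) auto
  then show ?thesis
  proof cases
    case 1
    have "(\<Sum>i<N. \<bar>b i\<bar>) \<le> F"
      using 1 by (intro sum_abs_le_of_dual_bound dual) (auto intro!: Xnorm_infinity_le_1 simp: sum_unit_vec)
    then show ?thesis
      using 1 form_norm_nonneg by (simp add: b_def F_def conj_exp_def)
  next
    case 2
    have "Xnorm p (\<lambda>n. \<Sum>i<N. c i * unit_vec i n) = (\<Sum>n<N. \<bar>c n\<bar> powr P) powr (1/P)" for c
      using 2 by (subst Xnorm_finitely_supported[where N = N]) (simp_all add: sum_unit_vec)
    then have "(\<Sum>i<N. \<bar>b i\<bar> powr (P / (P - 1))) \<le> F powr (P / (P - 1))"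
      using 2 by (intro sum_abs_powr_le_of_dual_bound dual) (simp_all add: powr_le1 sum_nonneg)
    then show ?thesis
      using 2 by (simp add: b_def F_def conj_exp_def)
  qed
qed

lemma finite_mixed_sum_le:
  assumes C: "khintchine_const C (conj_exp p)"
  shows "(\<Sum>i<N. (\<Sum>j\<in>PiE {1..<M} (\<lambda>_. {..<N}). (eval_units M T (j(0 := i)))^2) powr (conj_exp p / 2))
           \<le> (C ^ (M - 1) * form_norm M (lp_c0_exponents p) T) powr conj_exp p"
proof -
  define r where "r = conj_exp p"
  have r: "1 \<le> r" "r \<le> 2"
    using conj_exp_bounds[OF p_ge_2] by (simp_all add: r_def)
  have "1 \<le> C"
    using khintchine_const_ge_1[OF C] r by (simp add: r_def)
  define F where "F = form_norm M (lp_c0_exponents p) T"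
  define K where "K = {1..<M}"
  have K: "finite K" "K \<subseteq> {..<M}" "0 \<notin> K" "card K = M - 1"
    by (auto simp: K_def)
  define z :: "nat \<Rightarrow> nat \<Rightarrow> real" where "z = (\<lambda>k n. 0)"
  define z' where "z' i = z(0 := unit_vec i)" for i
  have z': "z' i \<in> mdom M (lp_c0_exponents p)" for i
    using M_pos mdom_zero finitely_supported_Xspace[OF finitely_supported_unit_vec]
    by (auto simp: z'_def z_def intro!: mdom_fun_upd)
  have eval: "eval_units M T (j(0 := i)) = T (with_units (z' i) K j)" for i j
    unfolding eval_units_def with_units_def z'_def z_def K_def
    using M_pos by (intro arg_cong[where f = T]) (auto simp: fun_eq_iff unit_vec_def)
  have "(\<Sum>i<N. (\<Sum>j\<in>PiE K (\<lambda>_. {..<N}). (T (with_units (z' i) K j))^2) powr (r/2))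
      \<le> (\<Sum>i<N. (C powr r) ^ (M - 1)
             * multi_sign_mean N K (\<lambda>\<kappa>. \<bar>T (with_signs N (z' i) K \<kappa>)\<bar> powr r))"
    using multiple_khintchine[OF C[folded r_def] r K(1,2) z'] by (intro sum_mono) (simp add: K(4))
  also have "\<dots> = (C powr r) ^ (M - 1)
      * multi_sign_mean N K (\<lambda>\<kappa>. \<Sum>i<N. \<bar>T ((with_signs N z K \<kappa>)(0 := unit_vec i))\<bar> powr r)"
    by (simp add: multi_sign_mean_sum sum_distrib_left z'_def with_signs_fun_upd[OF K(3)])
  also have "\<dots> \<le> (C powr r) ^ (M - 1) * multi_sign_mean N K (\<lambda>_. F powr r)"
  proof (intro mult_left_mono multi_sign_mean_mono)
    fix \<kappa>
    have "with_signs N z K \<kappa> \<in> mdom M (lp_c0_exponents p)"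
      using K(2) mdom_zero by (simp add: z_def with_signs_mdom)
    moreover have "Xnorm \<infinity> (with_signs N z K \<kappa> k) \<le> 1" for k
      by (intro Xnorm_infinity_le_1) (auto simp: with_signs_def z_def sign_vector_def)
    ultimately show "(\<Sum>i<N. \<bar>T ((with_signs N z K \<kappa>)(0 := unit_vec i))\<bar> powr r) \<le> F powr r"
      unfolding r_def F_def by (intro sum_powr_conj_exp_le_form_norm) auto
  qed simp
  also have "\<dots> = (C ^ (M - 1) * F) powr r"
    using K(1) \<open>1 \<le> C\<close> form_norm_nonneg
    by (simp add: multi_sign_mean_const power_powr_comm powr_mult F_def)
  finally show ?thesis
    by (simp add: eval r_def F_def K_def)
qed

end

section \<open>Passing to infinite sums\<close>

lemma finite_subset_PiE_lessThan:
  assumes "finite F" "finite A" "F \<subseteq> PiE A (\<lambda>_. UNIV :: nat set)"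
  shows "\<exists>N. F \<subseteq> PiE A (\<lambda>_. {..<N})"
proof -
  define N where "N = Suc (\<Sum>j\<in>F. \<Sum>k\<in>A. j k)"
  have "j k < N" if "j \<in> F" "k \<in> A" for j k
  proof -
    have "j k \<le> (\<Sum>k\<in>A. j k)"
      using that assms(2) by (intro member_le_sum) auto
    also have "\<dots> \<le> (\<Sum>j\<in>F. \<Sum>k\<in>A. j k)"
      using that assms(1) by (intro member_le_sum[where f = "\<lambda>j. \<Sum>k\<in>A. j k"]) auto
    finally show ?thesis
      by (simp add: N_def)
  qed
  then have "F \<subseteq> PiE A (\<lambda>_. {..<N})"
    using assms(3) by (auto simp: PiE_iff)
  then show ?thesis
    by blast
qed

lemma infsum_ennreal_eq_SUP:
  fixes f :: "'a \<Rightarrow> real" and B :: "nat \<Rightarrow> 'a set"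
  assumes B: "\<And>N. finite (B N)" "\<And>N. B N \<subseteq> S"
    and exhaust: "\<And>F. finite F \<Longrightarrow> F \<subseteq> S \<Longrightarrow> \<exists>N. F \<subseteq> B N"
    and f: "\<And>x. x \<in> S \<Longrightarrow> 0 \<le> f x"
  shows "(\<Sum>\<^sub>\<infinity>x\<in>S. ennreal (f x)) = (SUP N. ennreal (\<Sum>x\<in>B N. f x))"
proof (rule antisym)
  show "(\<Sum>\<^sub>\<infinity>x\<in>S. ennreal (f x)) \<le> (SUP N. ennreal (\<Sum>x\<in>B N. f x))"
  proof (rule infsum_le_finite_sums)
    fix F assume F: "finite F" "F \<subseteq> S"
    then obtain N where "F \<subseteq> B N"
      using exhaust by blast
    then have "(\<Sum>x\<in>F. ennreal (f x)) \<le> (\<Sum>x\<in>B N. ennreal (f x))"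
      using B by (intro sum_mono2) auto
    also have "\<dots> = ennreal (\<Sum>x\<in>B N. f x)"
      using B f by (intro sum_ennreal) auto
    also have "\<dots> \<le> (SUP N. ennreal (\<Sum>x\<in>B N. f x))"
      by (rule SUP_upper) simp
    finally show "(\<Sum>x\<in>F. ennreal (f x)) \<le> (SUP N. ennreal (\<Sum>x\<in>B N. f x))" .
  qed (rule nonneg_summable_on_complete, simp)
  have "ennreal (\<Sum>x\<in>B N. f x) = (\<Sum>x\<in>B N. ennreal (f x))" for N
    using B f by (intro sum_ennreal[symmetric]) auto
  also have "\<dots> N \<le> (\<Sum>\<^sub>\<infinity>x\<in>S. ennreal (f x))" for N
    using B by (auto simp: nonneg_infsum_complete intro!: SUP_upper2[of "B N"])
  finally have "ennreal (\<Sum>x\<in>B N. f x) \<le> (\<Sum>\<^sub>\<infinity>x\<in>S. ennreal (f x))" for N .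
  then show "(SUP N. ennreal (\<Sum>x\<in>B N. f x)) \<le> (\<Sum>\<^sub>\<infinity>x\<in>S. ennreal (f x))"
    by (rule SUP_least)
qed

lemma incseq_sum_mono_sets:
  fixes f :: "'a \<Rightarrow> real"
  assumes "mono B" "\<And>N. finite (B N)" "\<And>N x. x \<in> B N \<Longrightarrow> 0 \<le> f x"
  shows "incseq (\<lambda>N. \<Sum>x\<in>B N. f x)"
  unfolding incseq_def using assms by (intro allI impI sum_mono2) (auto dest: monoD)

lemma infsum_ennreal_finite_limit:
  fixes f :: "'a \<Rightarrow> real" and B :: "nat \<Rightarrow> 'a set"
  assumes B: "\<And>N. finite (B N)" "\<And>N. B N \<subseteq> S" "mono B"
    and exhaust: "\<And>F. finite F \<Longrightarrow> F \<subseteq> S \<Longrightarrow> \<exists>N. F \<subseteq> B N"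
    and f: "\<And>x. x \<in> S \<Longrightarrow> 0 \<le> f x" and bounded: "\<And>N. (\<Sum>x\<in>B N. f x) \<le> b"
  shows "(\<Sum>\<^sub>\<infinity>x\<in>S. ennreal (f x)) = ennreal (enn2real (\<Sum>\<^sub>\<infinity>x\<in>S. ennreal (f x)))"
    and "(\<lambda>N. \<Sum>x\<in>B N. f x) \<longlonglongrightarrow> enn2real (\<Sum>\<^sub>\<infinity>x\<in>S. ennreal (f x))"
proof -
  have sup: "(\<Sum>\<^sub>\<infinity>x\<in>S. ennreal (f x)) = (SUP N. ennreal (\<Sum>x\<in>B N. f x))"
    by (rule infsum_ennreal_eq_SUP[OF B(1,2) exhaust f])
  also have "\<dots> \<le> ennreal b"
    using bounded by (intro SUP_least ennreal_leI)
  finally have finite: "(\<Sum>\<^sub>\<infinity>x\<in>S. ennreal (f x)) \<noteq> top"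
    using ennreal_neq_top neq_top_trans by blast
  then show eq: "(\<Sum>\<^sub>\<infinity>x\<in>S. ennreal (f x)) = ennreal (enn2real (\<Sum>\<^sub>\<infinity>x\<in>S. ennreal (f x)))"
    by (simp only: ennreal_enn2real_if if_False)
  have "incseq (\<lambda>N. \<Sum>x\<in>B N. f x)"
    using B f by (intro incseq_sum_mono_sets) auto
  then have "(\<lambda>N. ennreal (\<Sum>x\<in>B N. f x)) \<longlonglongrightarrow> (SUP N. ennreal (\<Sum>x\<in>B N. f x))"
    by (intro LIMSEQ_SUP) (simp add: incseq_def ennreal_leI)
  moreover have "(SUP N. ennreal (\<Sum>x\<in>B N. f x)) = ennreal (enn2real (\<Sum>\<^sub>\<infinity>x\<in>S. ennreal (f x)))"
    by (rule trans[OF sup[symmetric] eq])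
  ultimately have "(\<lambda>N. ennreal (\<Sum>x\<in>B N. f x)) \<longlonglongrightarrow> ennreal (enn2real (\<Sum>\<^sub>\<infinity>x\<in>S. ennreal (f x)))"
    by simp
  moreover have "0 \<le> (\<Sum>x\<in>B N. f x)" for N
    using B(2) f by (meson subsetD sum_nonneg)
  ultimately show "(\<lambda>N. \<Sum>x\<in>B N. f x) \<longlonglongrightarrow> enn2real (\<Sum>\<^sub>\<infinity>x\<in>S. ennreal (f x))"
    by (intro tendsto_ennrealD) simp_all
qed

lemma infsum_ennpowr_le:
  fixes a :: "nat \<Rightarrow> 'a \<Rightarrow> real" and B :: "nat \<Rightarrow> 'a set"
  assumes B: "\<And>N. finite (B N)" "\<And>N. B N \<subseteq> S" "mono B"
    and exhaust: "\<And>F. finite F \<Longrightarrow> F \<subseteq> S \<Longrightarrow> \<exists>N. F \<subseteq> B N"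
    and a: "\<And>i x. x \<in> S \<Longrightarrow> 0 \<le> a i x" and t: "0 < t"
    and bound: "\<And>N. (\<Sum>i<N. (\<Sum>x\<in>B N. a i x) powr t) \<le> c"
  shows "(\<Sum>\<^sub>\<infinity>i\<in>UNIV. ennpowr (\<Sum>\<^sub>\<infinity>x\<in>S. ennreal (a i x)) t) \<le> ennreal c"
proof -
  define s where "s N i = (\<Sum>x\<in>B N. a i x)" for N i
  define v where "v i = enn2real (\<Sum>\<^sub>\<infinity>x\<in>S. ennreal (a i x))" for i
  have s_nonneg: "0 \<le> s N i" for N i
    unfolding s_def by (meson B(2) a subsetD sum_nonneg)
  have v_nonneg: "0 \<le> v i" for i
    by (simp add: v_def)
  have s_bounded: "s N i \<le> c powr (1/t)" for N i
  proof -
    define N' where "N' = max N (Suc i)"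
    have "s N' i powr t \<le> (\<Sum>i<N'. s N' i powr t)"
      by (intro member_le_sum) (auto simp: N'_def)
    also have "\<dots> \<le> c"
      using bound by (simp add: s_def)
    finally have "(s N' i powr t) powr (1/t) \<le> c powr (1/t)"
      using t by (intro powr_mono2) auto
    moreover have "incseq (\<lambda>N. s N i)"
      unfolding s_def by (intro incseq_sum_mono_sets[OF B(3,1)]) (meson B(2) a subsetD)
    then have "s N i \<le> s N' i"
      by (simp add: incseq_def N'_def)
    ultimately show ?thesis
      using t s_nonneg by (simp add: powr_powr)
  qed
  have inner: "(\<Sum>\<^sub>\<infinity>x\<in>S. ennreal (a i x)) = ennreal (v i)"
    and s_lim: "(\<lambda>N. s N i) \<longlonglongrightarrow> v i" for i
    using infsum_ennreal_finite_limit[OF B exhaust a s_bounded[unfolded s_def]]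
    by (simp_all add: v_def s_def)
  have v_bound: "(\<Sum>i<N0. v i powr t) \<le> c" for N0
  proof (rule LIMSEQ_le_const2)
    show "(\<lambda>N. \<Sum>i<N0. s N i powr t) \<longlonglongrightarrow> (\<Sum>i<N0. v i powr t)"
      using t s_nonneg by (intro tendsto_sum tendsto_powr' s_lim tendsto_const) auto
    have "(\<Sum>i<N0. s N i powr t) \<le> c" if "N0 \<le> N" for N
    proof -
      have "(\<Sum>i<N0. s N i powr t) \<le> (\<Sum>i<N. s N i powr t)"
        using that by (intro sum_mono2) auto
      also have "\<dots> \<le> c"
        using bound by (simp add: s_def)
      finally show ?thesis .
    qed
    then show "\<exists>N. \<forall>n\<ge>N. (\<Sum>i<N0. s n i powr t) \<le> c"
      by blast
  qed
  have "(\<Sum>\<^sub>\<infinity>i\<in>UNIV. ennpowr (\<Sum>\<^sub>\<infinity>x\<in>S. ennreal (a i x)) t) = (\<Sum>\<^sub>\<infinity>i\<in>UNIV. ennreal (v i powr t))"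
    using v_nonneg by (simp add: inner ennpowr_def)
  also have "\<dots> = (SUP N0. ennreal (\<Sum>i<N0. v i powr t))"
    using finite_nat_bounded by (intro infsum_ennreal_eq_SUP) (auto simp: lessThan_def)
  also have "\<dots> \<le> ennreal c"
    using v_bound by (intro SUP_least ennreal_leI)
  finally show ?thesis .
qed

lemma ennpowr_inverse_le:
  assumes "0 < q" "0 \<le> b" "x \<le> ennreal (b powr q)"
  shows "ennpowr x (1/q) \<le> ennreal b"
proof -
  have "x \<noteq> top"
    using assms(3) by (auto simp: top_unique)
  moreover have "enn2real x \<le> b powr q"
    using assms(3) by (intro enn2real_leI) auto
  then have "enn2real x powr (1/q) \<le> (b powr q) powr (1/q)"
    using assms(1) by (intro powr_mono2) auto
  ultimately show ?thesis
    using assms(1,2) by (simp add: ennpowr_def powr_powr ennreal_leI)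
qed

theorem theorem4p1:
  fixes M :: nat and p :: ereal and T :: "(nat \<Rightarrow> nat \<Rightarrow> real) \<Rightarrow> real"
  defines "ps \<equiv> (\<lambda>k::nat. if k = 0 then p else \<infinity>)"
  assumes "M \<ge> 3" and "2 \<le> p"
    and "multilinear_form M ps T" and "continuous_form M ps T"
  shows "mixed_sum M (conj_exp p) T
           \<le> ennreal (khintchine_A (conj_exp p) ^ (M - 1) * form_norm M ps T)"
proof -
  have "p \<noteq> \<infinity> \<Longrightarrow> 0 < real_of_ereal p"
    using \<open>2 \<le> p\<close> by (cases p) auto
  then interpret lp_c0_functional M p T
    by unfold_locales (use assms in \<open>auto simp: ps_def split: if_splits\<close>)
  define r where "r = conj_exp p"
  define C where "C = khintchine_A r"
  define B where "B = C ^ (M - 1) * form_norm M ps T"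
  have r: "1 \<le> r" "r \<le> 2"
    using conj_exp_bounds[OF \<open>2 \<le> p\<close>] by (simp_all add: r_def)
  have C: "khintchine_const C r"
    using khintchine_const_khintchine_A[OF r(1)] by (simp add: C_def)
  have "0 \<le> B"
    using khintchine_const_ge_1[OF C] r form_norm_nonneg by (simp add: B_def ps_def)
  have "(\<Sum>\<^sub>\<infinity>i\<in>UNIV. ennpowr (\<Sum>\<^sub>\<infinity>j\<in>PiE {1..<M} (\<lambda>_. UNIV).
          ennreal ((eval_units M T (j(0 := i)))\<^sup>2)) (r / 2)) \<le> ennreal (B powr r)"
    using finite_mixed_sum_le[OF C[unfolded r_def]] r
    by (intro infsum_ennpowr_le[where B = "\<lambda>N. PiE {1..<M} (\<lambda>_. {..<N})"] finite_subset_PiE_lessThan)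
       (auto simp: mono_def PiE_mono B_def r_def ps_def intro!: finite_PiE)
  then show ?thesis
    using r \<open>0 \<le> B\<close> unfolding mixed_sum_def
    by (intro ennpowr_inverse_le) (simp_all add: r_def B_def C_def)
qed

end
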